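(* If $n > 1$ and $n \ne 5$, then there is some $n \times n$ panstochastic matrix that is not a convex combination of panstochastic permutation matrices.
   Context: An $n \times n$ matrix with nonnegative real entries is doubly stochastic if the sum of the entries along any of its rows or columns is equal to $1$. A doubly stochastic matrix is panstochastic if the sum of the entries along any downward diagonal or upward diagonal, either broken or unbroken, is equal to $1$ (indexing rows and columns by $\{0,1,\dots,n-1\}$, the $k$th upward diagonal consists of the entries $(i,j)$ with $i+j \equiv k \pmod n$, and the $k$th downward diagonal of the entries $(i,j)$ with $i-j \equiv k \pmod n$). A linear combination is convex if the coefficients are nonnegative and sum to $1$. *)

theory Defs
  imports Complex_Main
begin

text \<open>An n x n real matrix is represented as a function nat => nat => real;
  only the entries with row and column indices in {0..<n} are relevant.\<close>

definition doubly_stochastic :: "nat \<Rightarrow> (nat \<Rightarrow> nat \<Rightarrow> real) \<Rightarrow> bool" where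
  "doubly_stochastic n A \<longleftrightarrow>
     (\<forall>i<n. \<forall>j<n. 0 \<le> A i j) \<and>
     (\<forall>i<n. (\<Sum>j<n. A i j) = 1) \<and>
     (\<forall>j<n. (\<Sum>i<n. A i j) = 1)"

definition upward_diag :: "nat \<Rightarrow> nat \<Rightarrow> (nat \<times> nat) set" where
  "upward_diag n k = {(i, j). i < n \<and> j < n \<and> (i + j) mod n = k mod n}"

definition downward_diag :: "nat \<Rightarrow> nat \<Rightarrow> (nat \<times> nat) set" where
  "downward_diag n k = {(i, j). i < n \<and> j < n \<and> (int i - int j) mod int n = int k mod int n}"

definition panstochastic :: "nat \<Rightarrow> (nat \<Rightarrow> nat \<Rightarrow> real) \<Rightarrow> bool" where
  "panstochastic n A \<longleftrightarrow>
     doubly_stochastic n A \<and>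
     (\<forall>k<n. (\<Sum>(i, j)\<in>upward_diag n k. A i j) = 1) \<and>
     (\<forall>k<n. (\<Sum>(i, j)\<in>downward_diag n k. A i j) = 1)"

definition permutation_matrix :: "nat \<Rightarrow> (nat \<Rightarrow> nat \<Rightarrow> real) \<Rightarrow> bool" where
  "permutation_matrix n P \<longleftrightarrow>
     (\<exists>\<sigma>. bij_betw \<sigma> {..<n} {..<n} \<and>
          (\<forall>i<n. \<forall>j<n. P i j = (if \<sigma> i = j then 1 else 0)))"

definition convex_comb_of :: "nat \<Rightarrow> ((nat \<Rightarrow> nat \<Rightarrow> real) \<Rightarrow> bool) \<Rightarrow> (nat \<Rightarrow> nat \<Rightarrow> real) \<Rightarrow> bool" where
  "convex_comb_of n S A \<longleftrightarrow>
     (\<exists>m::nat. \<exists>c::nat \<Rightarrow> real. \<exists>P::nat \<Rightarrow> nat \<Rightarrow> nat \<Rightarrow> real.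
        (\<forall>l<m. 0 \<le> c l \<and> S (P l)) \<and> (\<Sum>l<m. c l) = 1 \<and>
        (\<forall>i<n. \<forall>j<n. A i j = (\<Sum>l<m. c l * P l i j)))"

end

theory Submission
  imports Defs
begin

text \<open>The four cells (0,0), (1,-1), (1,0), (1,1) pairwise share a row, a column or a broken
  diagonal, so a panstochastic permutation matrix has at most one 1 among them, and every convex
  combination of such matrices has total mass at most 1 there. It therefore suffices to exhibit,
  for odd n \<noteq> 5, a panstochastic matrix with mass greater than 1 on these cells: the uniform
  matrix for n = 3, explicit integer matrices for n = 7, 9, 11, and for n \<ge> 13 the uniform
  matrix perturbed by balanced units, matrices concentrated at one cell whose line sums all vanish.
  For even n there is no panstochastic permutation matrix at all: for such a matrix with
  permutation \<sigma>, the upward diagonals force i \<mapsto> i + \<sigma> i to permute the residues mod n, and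
  summing gives 0 + \<dots> + (n - 1) \<equiv> 2 (0 + \<dots> + (n - 1)), i.e. n divides n (n - 1) / 2.\<close>

section \<open>Lines of the torus\<close>

lemma of_nat_add_diff_mod:
  assumes "k < n" "i < n"
  shows "int ((i + n - k) mod n) = (int i - int k) mod int n"
proof -
  have "int (i + n - k) = (int i - int k) + int n"
    using assms by simp
  then show ?thesis
    by (simp add: of_nat_mod)
qed

lemma upward_diag_eq_image:
  assumes "k < n"
  shows "upward_diag n k = (\<lambda>i. (i, (k + n - i) mod n)) ` {..<n}"
proof (intro set_eqI iffI)
  fix c assume "c \<in> upward_diag n k"
  then obtain i j where c: "c = (i, j)" "i < n" "j < n" "k = (i + j) mod n"
    unfolding upward_diag_def using assms by auto
  have "int ((k + n - i) mod n) = (int ((i + j) mod n) - int i) mod int n"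
    using c assms of_nat_add_diff_mod[of i n k] by simp
  also have "\<dots> = int j"
    using c by (simp add: of_nat_mod mod_diff_left_eq)
  finally show "c \<in> (\<lambda>i. (i, (k + n - i) mod n)) ` {..<n}"
    using c by force
next
  fix c assume "c \<in> (\<lambda>i. (i, (k + n - i) mod n)) ` {..<n}"
  then obtain i where c: "c = (i, (k + n - i) mod n)" "i < n" by auto
  have "(i + (k + n - i) mod n) mod n = (k + n) mod n"
    using c by (simp add: mod_add_right_eq)
  then show "c \<in> upward_diag n k"
    using c assms unfolding upward_diag_def by auto
qed

lemma downward_diag_eq_image:
  assumes "k < n"
  shows "downward_diag n k = (\<lambda>i. (i, (i + n - k) mod n)) ` {..<n}"
proof (intro set_eqI iffI)
  fix c assume "c \<in> downward_diag n k"
  then obtain i j where c: "c = (i, j)" "i < n" "j < n" "int k = (int i - int j) mod int n"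
    unfolding downward_diag_def using assms by auto
  have "int ((i + n - k) mod n) = (int i - (int i - int j) mod int n) mod int n"
    using c assms of_nat_add_diff_mod by simp
  also have "\<dots> = int j"
    using c by (simp add: mod_diff_right_eq)
  finally show "c \<in> (\<lambda>i. (i, (i + n - k) mod n)) ` {..<n}"
    using c by force
next
  fix c assume "c \<in> (\<lambda>i. (i, (i + n - k) mod n)) ` {..<n}"
  then obtain i where c: "c = (i, (i + n - k) mod n)" "i < n" by auto
  have "(int i - int ((i + n - k) mod n)) mod int n = (int i - (int i - int k)) mod int n"
    using c assms by (simp add: of_nat_add_diff_mod mod_diff_right_eq)
  then show "c \<in> downward_diag n k"
    using c assms unfolding downward_diag_def by simp
qed

lemma sum_upward_diag:
  "k < n \<Longrightarrow> (\<Sum>(i, j)\<in>upward_diag n k. f i j) = (\<Sum>i<n. f i ((k + n - i) mod n))"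
  unfolding upward_diag_eq_image by (subst sum.reindex) (auto simp: inj_on_def)

lemma sum_downward_diag:
  "k < n \<Longrightarrow> (\<Sum>(i, j)\<in>downward_diag n k. f i j) = (\<Sum>i<n. f i ((i + n - k) mod n))"
  unfolding downward_diag_eq_image by (subst sum.reindex) (auto simp: inj_on_def)

lemma panstochastic_iff_line_sums:
  "panstochastic n A \<longleftrightarrow>
     (\<forall>i<n. \<forall>j<n. 0 \<le> A i j) \<and>
     (\<forall>i<n. (\<Sum>j<n. A i j) = 1) \<and>
     (\<forall>j<n. (\<Sum>i<n. A i j) = 1) \<and>
     (\<forall>k<n. (\<Sum>i<n. A i ((k + n - i) mod n)) = 1) \<and>
     (\<forall>k<n. (\<Sum>i<n. A i ((i + n - k) mod n)) = 1)"
  unfolding panstochastic_def doubly_stochastic_def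
  by (simp add: sum_upward_diag sum_downward_diag)

lemma panstochastic_uniform: "0 < n \<Longrightarrow> panstochastic n (\<lambda>i j. 1 / real n)"
  unfolding panstochastic_iff_line_sums by simp

fun share_line :: "nat \<Rightarrow> nat \<times> nat \<Rightarrow> nat \<times> nat \<Rightarrow> bool" where
  "share_line n (i, j) (a, b) \<longleftrightarrow>
     i = a \<or> j = b \<or> (i + j) mod n = (a + b) mod n \<or>
     (int i - int j) mod int n = (int a - int b) mod int n"

definition line_clique :: "nat \<Rightarrow> (nat \<times> nat) set \<Rightarrow> bool" where
  "line_clique n C \<longleftrightarrow>
     C \<subseteq> {..<n} \<times> {..<n} \<and> (\<forall>c\<in>C. \<forall>d\<in>C. c \<noteq> d \<longrightarrow> share_line n c d)"

lemma add_le_sum: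
  fixes f :: "'a \<Rightarrow> 'b::ordered_comm_monoid_add"
  assumes "finite S" "\<And>z. z \<in> S \<Longrightarrow> 0 \<le> f z" "x \<in> S" "y \<in> S" "x \<noteq> y"
  shows "f x + f y \<le> sum f S"
proof -
  have "f x + f y = sum f {x, y}" using assms(5) by simp
  also have "\<dots> \<le> sum f S" using assms by (intro sum_mono2) auto
  finally show ?thesis .
qed

lemma panstochastic_add_le_one_on_line:
  assumes A: "panstochastic n A" and L: "L \<subseteq> {..<n} \<times> {..<n}" "(\<Sum>(p, q)\<in>L. A p q) = 1"
    and cells: "(i, j) \<in> L" "(a, b) \<in> L" "(i, j) \<noteq> (a, b)"
  shows "A i j + A a b \<le> 1"
proof -
  have "finite L" using finite_subset[OF L(1)] by simp
  moreover have "0 \<le> (\<lambda>(p, q). A p q) z" if "z \<in> L" for z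
    using that L(1) A unfolding panstochastic_def doubly_stochastic_def by (cases z) auto
  ultimately have "(\<lambda>(p, q). A p q) (i, j) + (\<lambda>(p, q). A p q) (a, b) \<le> (\<Sum>(p, q)\<in>L. A p q)"
    by (rule add_le_sum[OF _ _ cells])
  then show ?thesis using L(2) by simp
qed

lemma panstochastic_add_le_one:
  assumes A: "panstochastic n A" and cells: "i < n" "j < n" "a < n" "b < n"
    and share: "share_line n (i, j) (a, b)" and ne: "(i, j) \<noteq> (a, b)"
  shows "A i j + A a b \<le> 1"
proof -
  have nonneg: "\<And>p q. p < n \<Longrightarrow> q < n \<Longrightarrow> 0 \<le> A p q"
    using A unfolding panstochastic_def doubly_stochastic_def by blast
  from share consider "i = a" | "j = b" | "(i + j) mod n = (a + b) mod n"
    | "(int i - int j) mod int n = (int a - int b) mod int n" by auto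
  then show ?thesis
  proof cases
    case 1
    then have "A i j + A i b \<le> (\<Sum>q<n. A i q)"
      using ne cells nonneg by (intro add_le_sum) auto
    also have "\<dots> = 1" using A cells unfolding panstochastic_def doubly_stochastic_def by blast
    finally show ?thesis using 1 by simp
  next
    case 2
    then have "A i j + A a j \<le> (\<Sum>p<n. A p j)"
      using ne cells nonneg by (intro add_le_sum[where f = "\<lambda>p. A p j"]) auto
    also have "\<dots> = 1" using A cells unfolding panstochastic_def doubly_stochastic_def by blast
    finally show ?thesis using 2 by simp
  next
    case 3
    define k where "k = (i + j) mod n"
    have "k < n" using cells unfolding k_def by simp
    show ?thesis
    proof (rule panstochastic_add_le_one_on_line[OF A _ _ _ _ ne])
      show "upward_diag n k \<subseteq> {..<n} \<times> {..<n}" unfolding upward_diag_def by auto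
      show "(\<Sum>(p, q)\<in>upward_diag n k. A p q) = 1"
        using A \<open>k < n\<close> unfolding panstochastic_def by blast
      show "(i, j) \<in> upward_diag n k" "(a, b) \<in> upward_diag n k"
        using 3 cells unfolding upward_diag_def k_def by auto
    qed
  next
    case 4
    define k where "k = nat ((int i - int j) mod int n)"
    have k: "k < n" "int k = (int i - int j) mod int n"
      using cells unfolding k_def by (auto simp: nat_less_iff)
    show ?thesis
    proof (rule panstochastic_add_le_one_on_line[OF A _ _ _ _ ne])
      show "downward_diag n k \<subseteq> {..<n} \<times> {..<n}" unfolding downward_diag_def by auto
      show "(\<Sum>(p, q)\<in>downward_diag n k. A p q) = 1"
        using A k(1) unfolding panstochastic_def by blast
      show "(i, j) \<in> downward_diag n k" "(a, b) \<in> downward_diag n k"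
        using 4 cells k(2) unfolding downward_diag_def by auto
    qed
  qed
qed

section \<open>Panstochastic permutation matrices\<close>

lemma permutation_matrix_01:
  "permutation_matrix n P \<Longrightarrow> i < n \<Longrightarrow> j < n \<Longrightarrow> P i j = 0 \<or> P i j = 1"
  unfolding permutation_matrix_def by auto

lemma panstochastic_permutation_sum_clique_le_one:
  assumes P: "permutation_matrix n P" "panstochastic n P" and C: "line_clique n C"
  shows "(\<Sum>(i, j)\<in>C. P i j) \<le> 1"
proof (cases "\<exists>(i, j)\<in>C. P i j = 1")
  case True
  then obtain i j where ij: "(i, j) \<in> C" "P i j = 1" by auto
  have P_C: "P a b = (if (a, b) = (i, j) then 1 else 0)" if "(a, b) \<in> C" for a b
  proof -
    have "P a b = 0 \<or> P a b = 1"
      using permutation_matrix_01[OF P(1)] that C unfolding line_clique_def by blast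
    moreover have "P i j + P a b \<le> 1" if "(a, b) \<noteq> (i, j)"
      using panstochastic_add_le_one[OF P(2)] ij \<open>(a, b) \<in> C\<close> that C
      unfolding line_clique_def by (metis mem_Sigma_iff lessThan_iff subset_iff)
    ultimately show ?thesis using ij by auto
  qed
  have "(\<Sum>(a, b)\<in>C. P a b) = (\<Sum>c\<in>C. if c = (i, j) then 1 else 0)"
    using P_C by (intro sum.cong) (auto split: if_splits)
  also have "\<dots> = 1"
    using ij C finite_subset[of C "{..<n} \<times> {..<n}"] unfolding line_clique_def by simp
  finally show ?thesis by simp
next
  case False
  then have "P i j = 0" if "(i, j) \<in> C" for i j
    using permutation_matrix_01[OF P(1)] that C unfolding line_clique_def by blast
  then show ?thesis by (simp add: case_prod_beta)
qed

lemma convex_comb_of_sum_le: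
  assumes A: "convex_comb_of n S A" and C: "C \<subseteq> {..<n} \<times> {..<n}"
    and bound: "\<And>P. S P \<Longrightarrow> (\<Sum>(i, j)\<in>C. P i j) \<le> r"
  shows "(\<Sum>(i, j)\<in>C. A i j) \<le> r"
proof -
  obtain m and c :: "nat \<Rightarrow> real" and P where cP: "\<forall>l<m. 0 \<le> c l \<and> S (P l)" "(\<Sum>l<m. c l) = 1"
    and A_eq: "\<forall>i<n. \<forall>j<n. A i j = (\<Sum>l<m. c l * P l i j)"
    using A unfolding convex_comb_of_def by blast
  have "(\<Sum>(i, j)\<in>C. A i j) = (\<Sum>(i, j)\<in>C. \<Sum>l<m. c l * P l i j)"
    using A_eq C by (intro sum.cong) auto
  also have "\<dots> = (\<Sum>l<m. c l * (\<Sum>(i, j)\<in>C. P l i j))"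
    unfolding case_prod_beta sum_distrib_left by (rule sum.swap)
  also have "\<dots> \<le> (\<Sum>l<m. c l * r)"
    using cP bound by (intro sum_mono mult_left_mono) auto
  also have "\<dots> = r" using cP(2) by (simp flip: sum_distrib_right)
  finally show ?thesis .
qed

lemma not_convex_comb_if_clique_sum_gt_one:
  assumes C: "line_clique n C" and gt_one: "1 < (\<Sum>(i, j)\<in>C. A i j)"
  shows "\<not> convex_comb_of n (\<lambda>P. permutation_matrix n P \<and> panstochastic n P) A"
  using convex_comb_of_sum_le[of n _ A C 1] panstochastic_permutation_sum_clique_le_one[OF _ _ C]
    C gt_one
  unfolding line_clique_def by force

lemma convex_comb_of_imp_ex:
  assumes "convex_comb_of n S A"
  shows "\<exists>P. S P"
proof -
  obtain m and c :: "nat \<Rightarrow> real" and P where "\<forall>l<m. S (P l)" "(\<Sum>l<m. c l) = 1"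
    using assms unfolding convex_comb_of_def by blast
  then have "0 < m" by (cases m) auto
  then show ?thesis using \<open>\<forall>l<m. S (P l)\<close> by blast
qed

lemma double_sum_lessThan: "2 * (\<Sum>i<n. i) + n = n * (n::nat)"
  by (induction n) (auto simp: algebra_simps)

lemma even_not_inj_on_add_mod:
  fixes n :: nat
  assumes n: "even n" "0 < n" and \<sigma>: "bij_betw \<sigma> {..<n} {..<n}"
  shows "\<not> inj_on (\<lambda>i. (i + \<sigma> i) mod n) {..<n}"
proof
  assume inj: "inj_on (\<lambda>i. (i + \<sigma> i) mod n) {..<n}"
  moreover have "(\<lambda>i. (i + \<sigma> i) mod n) ` {..<n} \<subseteq> {..<n}" using n(2) by auto
  ultimately have "bij_betw (\<lambda>i. (i + \<sigma> i) mod n) {..<n} {..<n}"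
    by (simp add: bij_betw_def endo_inj_surj)
  then have sum_mod: "(\<Sum>i<n. (i + \<sigma> i) mod n) = (\<Sum>i<n. i)"
    by (rule sum.reindex_bij_betw)
  have sum_\<sigma>: "(\<Sum>i<n. \<sigma> i) = (\<Sum>i<n. i)"
    using \<sigma> by (rule sum.reindex_bij_betw)
  have "(\<Sum>i<n. i) mod n = (\<Sum>i<n. i + \<sigma> i) mod n"
    using mod_sum_eq[of "\<lambda>i. i + \<sigma> i" n "{..<n}"] sum_mod by simp
  also have "\<dots> = (2 * (\<Sum>i<n. i)) mod n"
    using sum_\<sigma> by (simp add: sum.distrib mult_2)
  also have "\<dots> = (2 * (\<Sum>i<n. i) + n) mod n" by simp
  also have "\<dots> = 0" by (simp add: double_sum_lessThan)
  finally obtain q where "(\<Sum>i<n. i) = n * q" by blast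
  then have "n * (2 * q + 1) = n * n"
    using double_sum_lessThan[of n] by (simp add: algebra_simps)
  then have "n = 2 * q + 1" using n(2) by (metis mult_left_cancel neq0_conv)
  then show False using n(1) by simp
qed

lemma permutation_matrix_not_panstochastic_even:
  assumes n: "even n" "0 < n" and P: "permutation_matrix n P"
  shows "\<not> panstochastic n P"
proof
  assume pan: "panstochastic n P"
  obtain \<sigma> where \<sigma>: "bij_betw \<sigma> {..<n} {..<n}"
    and P_eq: "\<And>i j. i < n \<Longrightarrow> j < n \<Longrightarrow> P i j = (if \<sigma> i = j then 1 else 0)"
    using P unfolding permutation_matrix_def by blast
  have "inj_on (\<lambda>i. (i + \<sigma> i) mod n) {..<n}"
  proof (rule inj_onI, rule ccontr)
    fix i i' assume i: "i \<in> {..<n}" "i' \<in> {..<n}" "(i + \<sigma> i) mod n = (i' + \<sigma> i') mod n" "i \<noteq> i'"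
    have "\<sigma> i < n" "\<sigma> i' < n" using i \<sigma> by (auto dest: bij_betwE)
    then have "P i (\<sigma> i) + P i' (\<sigma> i') \<le> 1"
      using i by (intro panstochastic_add_le_one[OF pan]) auto
    then show False using P_eq i \<open>\<sigma> i < n\<close> \<open>\<sigma> i' < n\<close> by simp
  qed
  then show False using even_not_inj_on_add_mod[OF n \<sigma>] by blast
qed

section \<open>Small odd orders\<close>

definition corner_clique :: "nat \<Rightarrow> (nat \<times> nat) set" where
  "corner_clique n = {(0, 0), (1, n - 1), (1, 0), (1, 1)}"

lemma line_clique_corner_clique: "1 < n \<Longrightarrow> line_clique n (corner_clique n)"
  unfolding line_clique_def corner_clique_def by auto

lemma sum_corner_clique:
  "2 < n \<Longrightarrow> (\<Sum>(i, j)\<in>corner_clique n. A i j) = A 0 0 + A 1 (n - 1) + A 1 0 + A 1 1"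
  unfolding corner_clique_def by (simp add: add.assoc)

text \<open>Stated with lists so that \<open>code_simp\<close> can evaluate it.\<close>

definition line_sums_equal :: "nat \<Rightarrow> (nat \<Rightarrow> nat \<Rightarrow> nat) \<Rightarrow> nat \<Rightarrow> bool" where
  "line_sums_equal n M d \<longleftrightarrow>
     list_all (\<lambda>i. sum_list (map (\<lambda>j. M i j) [0..<n]) = d) [0..<n] \<and>
     list_all (\<lambda>j. sum_list (map (\<lambda>i. M i j) [0..<n]) = d) [0..<n] \<and>
     list_all (\<lambda>k. sum_list (map (\<lambda>i. M i ((k + n - i) mod n)) [0..<n]) = d) [0..<n] \<and>
     list_all (\<lambda>k. sum_list (map (\<lambda>i. M i ((i + n - k) mod n)) [0..<n]) = d) [0..<n]"

lemma panstochastic_if_line_sums_equal: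
  assumes M: "line_sums_equal n M d" and d: "0 < d"
  shows "panstochastic n (\<lambda>i j. real (M i j) / real d)"
proof -
  have sums: "(\<Sum>x<n. real (f x) / real d) = 1" if "(\<Sum>x<n. f x) = d" for f :: "nat \<Rightarrow> nat"
    using that d by (simp flip: sum_divide_distrib of_nat_sum)
  have "sum_list (map f [0..<n]) = (\<Sum>x<n. f x)" for f :: "nat \<Rightarrow> nat"
    by (simp add: interv_sum_list_conv_sum_set_nat atLeast0LessThan)
  with M have "\<forall>i<n. (\<Sum>j<n. M i j) = d" "\<forall>j<n. (\<Sum>i<n. M i j) = d"
    "\<forall>k<n. (\<Sum>i<n. M i ((k + n - i) mod n)) = d" "\<forall>k<n. (\<Sum>i<n. M i ((i + n - k) mod n)) = d"
    unfolding line_sums_equal_def list_all_iff by auto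
  then show ?thesis
    unfolding panstochastic_iff_line_sums by (simp add: sums)
qed

lemma ex_panstochastic_corner_sum_gt_one_if_line_sums_equal:
  assumes M: "line_sums_equal n M d" and d: "0 < d" and n: "2 < n"
    and gt_one: "d < M 0 0 + M 1 (n - 1) + M 1 0 + M 1 1"
  shows "\<exists>A. panstochastic n A \<and> 1 < (\<Sum>(i, j)\<in>corner_clique n. A i j)"
proof (intro exI conjI)
  show "panstochastic n (\<lambda>i j. real (M i j) / real d)"
    using panstochastic_if_line_sums_equal[OF M d] .
  have "real d < real (M 0 0 + M 1 (n - 1) + M 1 0 + M 1 1)"
    using gt_one by linarith
  then show "1 < (\<Sum>(i, j)\<in>corner_clique n. real (M i j) / real d)"
    using d n by (simp add: sum_corner_clique field_simps)
qed

definition M7 :: "nat \<Rightarrow> nat \<Rightarrow> nat" where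
  "M7 i j = [[1,0,0,0,1,0,0],[1,1,0,0,0,0,0],[0,0,0,1,0,1,0],[0,0,1,0,0,1,0],
     [0,0,1,0,0,0,1],[0,1,0,0,0,0,1],[0,0,0,1,1,0,0]] ! i ! j"

definition M9 :: "nat \<Rightarrow> nat \<Rightarrow> nat" where
  "M9 i j = [[1,0,0,1,0,1,0,0,0],[0,2,0,0,0,0,0,0,1],[0,0,0,0,0,0,2,1,0],[0,0,1,0,1,1,0,0,0],
    [1,1,0,1,0,0,0,0,0],[0,0,1,0,0,0,0,2,0],[1,0,0,0,2,0,0,0,0],[0,0,0,0,0,0,1,0,2],
    [0,0,1,1,0,1,0,0,0]] ! i ! j"

definition M11 :: "nat \<Rightarrow> nat \<Rightarrow> nat" where
  "M11 i j = [[1,0,0,0,0,0,1,0,0,0,0],[0,1,0,0,0,0,0,0,0,0,1],[0,0,0,1,0,1,0,0,0,0,0],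
    [0,1,0,0,0,0,0,1,0,0,0],[0,0,0,0,0,1,0,0,0,1,0],[0,0,1,0,0,0,0,1,0,0,0],
    [0,0,0,0,0,0,0,0,1,0,1],[0,0,1,1,0,0,0,0,0,0,0],[1,0,0,0,1,0,0,0,0,0,0],
    [0,0,0,0,0,0,1,0,1,0,0],[0,0,0,0,1,0,0,0,0,1,0]] ! i ! j"

lemma ex_panstochastic_corner_sum_gt_one_7_9_11:
  assumes "n \<in> {7, 9, 11}"
  shows "\<exists>A. panstochastic n A \<and> 1 < (\<Sum>(i, j)\<in>corner_clique n. A i j)"
proof -
  have "line_sums_equal 7 M7 2" "line_sums_equal 9 M9 3" "line_sums_equal 11 M11 2"
    by code_simp+
  moreover have "M7 0 0 + M7 1 6 + M7 1 0 + M7 1 1 = 3" "M9 0 0 + M9 1 8 + M9 1 0 + M9 1 1 = 4"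
    "M11 0 0 + M11 1 10 + M11 1 0 + M11 1 1 = 3"
    by code_simp+
  ultimately show ?thesis
    using assms ex_panstochastic_corner_sum_gt_one_if_line_sums_equal[of 7 M7 2]
      ex_panstochastic_corner_sum_gt_one_if_line_sums_equal[of 9 M9 3]
      ex_panstochastic_corner_sum_gt_one_if_line_sums_equal[of 11 M11 2]
    by auto
qed

section \<open>Balanced units\<close>

text \<open>For matrices on \<int> \<times> \<int> that are periodic in the column index, the broken diagonals become
  the lines Y = K - X and Y = X - K.\<close>

lemma panstochastic_of_periodic:
  fixes F :: "int \<Rightarrow> int \<Rightarrow> real"
  assumes periodic: "\<And>X Y. F X (Y mod int n) = F X Y"
    and nonneg: "\<And>i j. i < n \<Longrightarrow> j < n \<Longrightarrow> 0 \<le> F (int i) (int j)"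
    and rows: "\<And>X. (\<Sum>y<n. F X (int y)) = 1"
    and cols: "\<And>Y. (\<Sum>x<n. F (int x) Y) = 1"
    and up: "\<And>K. (\<Sum>x<n. F (int x) (K - int x)) = 1"
    and down: "\<And>K. (\<Sum>x<n. F (int x) (int x - K)) = 1"
  shows "panstochastic n (\<lambda>i j. F (int i) (int j))"
proof -
  have "(\<Sum>i<n. F (int i) (int ((k + n - i) mod n))) = 1" if "k < n" for k
  proof -
    have "(\<Sum>i<n. F (int i) (int ((k + n - i) mod n))) = (\<Sum>i<n. F (int i) (int k - int i))"
      using that by (intro sum.cong) (simp_all add: of_nat_add_diff_mod periodic)
    then show ?thesis using up by simp
  qed
  moreover have "(\<Sum>i<n. F (int i) (int ((i + n - k) mod n))) = 1" if "k < n" for k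
  proof -
    have "(\<Sum>i<n. F (int i) (int ((i + n - k) mod n))) = (\<Sum>i<n. F (int i) (int i - int k))"
      using that by (intro sum.cong) (simp_all add: of_nat_add_diff_mod periodic)
    then show ?thesis using down by simp
  qed
  ultimately show ?thesis
    unfolding panstochastic_iff_line_sums using nonneg rows cols by simp
qed

lemma sum_of_bool_mod_affine:
  assumes n: "0 < n" and coprime: "coprime \<alpha> (int n)" and f: "\<And>x. f x = \<alpha> * int x + \<beta>"
  shows "(\<Sum>x<n. of_bool (f x mod int n = \<gamma> mod int n)) = (1::real)"
proof -
  define g where "g x = nat (f x mod int n)" for x
  have "inj_on g {..<n}"
  proof (rule inj_onI)
    fix x y assume xy: "x \<in> {..<n}" "y \<in> {..<n}" "g x = g y"
    then have "f x mod int n = f y mod int n"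
      using n unfolding g_def by (simp add: eq_nat_nat_iff)
    then have "int n dvd \<alpha> * (int x - int y)"
      unfolding mod_eq_dvd_iff f by (simp add: algebra_simps)
    then have "int n dvd int x - int y"
      using coprime by (simp add: coprime_commute coprime_dvd_mult_right_iff)
    then have "int x mod int n = int y mod int n"
      by (simp only: mod_eq_dvd_iff)
    then show "x = y" using xy by simp
  qed
  moreover have "g ` {..<n} \<subseteq> {..<n}" using n by (auto simp: g_def nat_less_iff)
  ultimately have g: "bij_betw g {..<n} {..<n}"
    by (simp add: bij_betw_def endo_inj_surj)
  define c where "c = nat (\<gamma> mod int n)"
  have "f x mod int n = \<gamma> mod int n \<longleftrightarrow> g x = c" for x
    using n unfolding g_def c_def by (simp add: eq_nat_nat_iff)
  then have "(\<Sum>x<n. of_bool (f x mod int n = \<gamma> mod int n)) = (\<Sum>x<n. of_bool (g x = c) :: real)"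
    by presburger
  also have "\<dots> = (\<Sum>y<n. of_bool (y = c))"
    using sum.reindex_bij_betw[OF g, of "\<lambda>y. of_bool (y = c) :: real"] by simp
  also have "\<dots> = 1" using n by (simp add: c_def nat_less_iff)
  finally show ?thesis .
qed

definition common_lines :: "nat \<Rightarrow> int \<Rightarrow> int \<Rightarrow> int \<Rightarrow> int \<Rightarrow> real" where
  "common_lines n a b X Y =
     of_bool (X mod int n = a mod int n) + of_bool (Y mod int n = b mod int n) +
     of_bool ((X - Y) mod int n = (a - b) mod int n) +
     of_bool ((X + Y) mod int n = (a + b) mod int n)"

text \<open>For odd n a line meets every line of another family in exactly one cell, so all line
  sums of a balanced unit vanish.\<close>

definition balanced_unit :: "nat \<Rightarrow> int \<Rightarrow> int \<Rightarrow> int \<Rightarrow> int \<Rightarrow> real" where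
  "balanced_unit n a b X Y =
     of_bool (X mod int n = a mod int n \<and> Y mod int n = b mod int n)
     - common_lines n a b X Y / real n + 3 / (real n)\<^sup>2"

lemma balanced_unit_mod: "balanced_unit n a b X (Y mod int n) = balanced_unit n a b X Y"
  by (simp add: balanced_unit_def common_lines_def mod_diff_right_eq mod_add_right_eq)

lemma balanced_unit_transpose: "balanced_unit n a b X Y = balanced_unit n b a Y X"
proof -
  have "(Y - X) mod int n = (b - a) mod int n \<longleftrightarrow> (X - Y) mod int n = (a - b) mod int n"
    by (simp add: mod_eq_dvd_iff dvd_diff_commute algebra_simps)
  then show ?thesis
    by (simp add: balanced_unit_def common_lines_def add.commute conj_commute)
qed

lemma balanced_unit_reflect: "balanced_unit n a b X Y = balanced_unit n a (- b) X (- Y)"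
proof -
  have "(- Y) mod int n = (- b) mod int n \<longleftrightarrow> Y mod int n = b mod int n"
    by (simp add: mod_eq_dvd_iff dvd_diff_commute)
  then show ?thesis
    by (simp add: balanced_unit_def common_lines_def)
qed

lemma sum_balanced_unit:
  assumes "0 < n"
  shows "(\<Sum>x<n. balanced_unit n a b (P x) (Q x)) =
    (\<Sum>x<n. of_bool (P x mod int n = a mod int n \<and> Q x mod int n = b mod int n))
    - ((\<Sum>x<n. of_bool (P x mod int n = a mod int n)) + (\<Sum>x<n. of_bool (Q x mod int n = b mod int n))
       + (\<Sum>x<n. of_bool ((P x - Q x) mod int n = (a - b) mod int n))
       + (\<Sum>x<n. of_bool ((P x + Q x) mod int n = (a + b) mod int n))) / real n
    + 3 / real n"
  using assms
  by (simp add: balanced_unit_def common_lines_def sum.distrib sum_subtractf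
      flip: sum_divide_distrib) (simp add: power2_eq_square)

lemma balanced_unit_row_sum:
  assumes n: "odd n"
  shows "(\<Sum>y<n. balanced_unit n a b X (int y)) = 0"
proof -
  have "0 < n" using n by presburger
  have ones: "(\<Sum>y<n. of_bool (int y mod int n = b mod int n)) = (1::real)"
    by (rule sum_of_bool_mod_affine[where \<alpha> = 1 and \<beta> = 0]) (use \<open>0 < n\<close> in simp_all)
  have "(\<Sum>y<n. of_bool ((X - int y) mod int n = (a - b) mod int n)) = (1::real)"
    by (rule sum_of_bool_mod_affine[where \<alpha> = "-1" and \<beta> = X]) (use \<open>0 < n\<close> in simp_all)
  moreover have "(\<Sum>y<n. of_bool ((X + int y) mod int n = (a + b) mod int n)) = (1::real)"
    by (rule sum_of_bool_mod_affine[where \<alpha> = 1 and \<beta> = X]) (use \<open>0 < n\<close> in simp_all)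
  moreover have "(\<Sum>y<n. of_bool (X mod int n = a mod int n \<and> int y mod int n = b mod int n))
      = of_bool (X mod int n = a mod int n) *
        (\<Sum>y<n. of_bool (int y mod int n = b mod int n) :: real)"
    by (simp only: of_bool_conj sum_distrib_left)
  ultimately show ?thesis using ones \<open>0 < n\<close>
    by (simp add: sum_balanced_unit field_simps)
qed

lemma balanced_unit_up_sum:
  assumes n: "odd n"
  shows "(\<Sum>x<n. balanced_unit n a b (int x) (K - int x)) = 0"
proof -
  have "0 < n" using n by presburger
  have "coprime 2 (int n)" using n by simp
  have shift: "(x mod int n = a mod int n \<and> (K - x) mod int n = b mod int n) \<longleftrightarrow>
      (x mod int n = a mod int n \<and> K mod int n = (a + b) mod int n)" for x
  proof (cases "x mod int n = a mod int n")
    case True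
    then have "(K - x) mod int n = (K - a) mod int n" by (rule mod_diff_cong[OF refl])
    moreover have "(K - a) mod int n = b mod int n \<longleftrightarrow> K mod int n = (a + b) mod int n"
      by (simp only: mod_eq_dvd_iff diff_diff_eq)
    ultimately show ?thesis using True by simp
  qed simp
  have ones: "(\<Sum>x<n. of_bool (int x mod int n = a mod int n)) = (1::real)"
    by (rule sum_of_bool_mod_affine[where \<alpha> = 1 and \<beta> = 0]) (use \<open>0 < n\<close> in simp_all)
  have "(\<Sum>x<n. of_bool ((K - int x) mod int n = b mod int n)) = (1::real)"
    by (rule sum_of_bool_mod_affine[where \<alpha> = "-1" and \<beta> = K]) (use \<open>0 < n\<close> in simp_all)
  moreover have "(\<Sum>x<n. of_bool ((int x - (K - int x)) mod int n = (a - b) mod int n)) = (1::real)"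
    by (rule sum_of_bool_mod_affine[where \<alpha> = 2 and \<beta> = "-K"]) (use \<open>0 < n\<close> n in simp_all)
  moreover have
    "(\<Sum>x<n. of_bool (int x mod int n = a mod int n \<and> (K - int x) mod int n = b mod int n))
      = (\<Sum>x<n. of_bool (int x mod int n = a mod int n)) *
        (of_bool (K mod int n = (a + b) mod int n) :: real)"
    by (simp only: shift of_bool_conj sum_distrib_right)
  ultimately show ?thesis using ones \<open>0 < n\<close>
    by (simp add: sum_balanced_unit field_simps)
qed

lemma balanced_unit_col_sum:
  "odd n \<Longrightarrow> (\<Sum>x<n. balanced_unit n a b (int x) Y) = 0"
  using balanced_unit_row_sum[of n b a Y] by (simp add: balanced_unit_transpose[of n a b])

lemma balanced_unit_down_sum:
  "odd n \<Longrightarrow> (\<Sum>x<n. balanced_unit n a b (int x) (int x - K)) = 0"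
  using balanced_unit_up_sum[of n a "- b" K] by (simp add: balanced_unit_reflect[of n a b])

lemma balanced_unit_same_cell:
  assumes "X mod int n = a mod int n" "Y mod int n = b mod int n"
  shows "balanced_unit n a b X Y = 1 - 4 * (1 / real n) + 3 * (1 / real n)\<^sup>2"
proof -
  have "(X - Y) mod int n = (a - b) mod int n" "(X + Y) mod int n = (a + b) mod int n"
    using assms by (auto intro: mod_diff_cong mod_add_cong)
  with assms have "common_lines n a b X Y = 4" unfolding common_lines_def by simp
  then show ?thesis using assms by (simp add: balanced_unit_def power_divide)
qed

lemma common_lines_le_one:
  assumes n: "odd n" and ne: "\<not> (X mod int n = a mod int n \<and> Y mod int n = b mod int n)"
  shows "common_lines n a b X Y \<le> 1"
proof -
  define N u v where "N = int n" and "u = X - a" and "v = Y - b"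
  have lines: "X mod N = a mod N \<longleftrightarrow> N dvd u" "Y mod N = b mod N \<longleftrightarrow> N dvd v"
    "(X - Y) mod N = (a - b) mod N \<longleftrightarrow> N dvd u - v"
    "(X + Y) mod N = (a + b) mod N \<longleftrightarrow> N dvd u + v"
    unfolding u_def v_def mod_eq_dvd_iff by (simp_all add: algebra_simps)
  have not_both: "\<not> (N dvd u \<and> N dvd v)" using ne lines unfolding N_def by simp
  have diag: "N dvd u" if "N dvd u - v" "N dvd u + v"
  proof -
    have "N dvd 2 * u" using dvd_add[OF that] by (simp add: algebra_simps)
    moreover have "coprime N 2" using n unfolding N_def by simp
    ultimately show ?thesis by (simp add: coprime_dvd_mult_right_iff)
  qed
  have "N dvd v" if "N dvd u" "N dvd u - v" using dvd_diff[OF that] by simp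
  moreover have "N dvd v" if "N dvd u" "N dvd u + v" using dvd_diff[OF that(2,1)] by simp
  moreover have "N dvd u" if "N dvd v" "N dvd u - v" using dvd_add[OF that(2,1)] by simp
  moreover have "N dvd u" if "N dvd v" "N dvd u + v" using dvd_diff[OF that(2,1)] by simp
  ultimately have excl: "\<not> (N dvd u \<and> N dvd u - v)" "\<not> (N dvd u \<and> N dvd u + v)"
    "\<not> (N dvd v \<and> N dvd u - v)" "\<not> (N dvd v \<and> N dvd u + v)" "\<not> (N dvd u - v \<and> N dvd u + v)"
    using not_both diag by blast+
  have of_bool_le: "of_bool p + of_bool q + of_bool r + of_bool s \<le> (1::real)"
    if "\<not> (p \<and> q)" "\<not> (p \<and> r)" "\<not> (p \<and> s)" "\<not> (q \<and> r)" "\<not> (q \<and> s)" "\<not> (r \<and> s)"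
    for p q r s
    using that by (cases p; cases q; cases r; cases s) simp_all
  show ?thesis
    unfolding common_lines_def N_def[symmetric] lines
    by (rule of_bool_le) (use not_both excl in blast)+
qed

lemma balanced_unit_ge:
  assumes n: "odd n" "3 \<le> n"
  shows "3 * (1 / real n)\<^sup>2 - 1 / real n \<le> balanced_unit n a b X Y"
proof (cases "X mod int n = a mod int n \<and> Y mod int n = b mod int n")
  case True
  have "1 / real n \<le> 1 / 3" using n(2) by (simp add: field_simps)
  then show ?thesis using balanced_unit_same_cell[of X n a Y b] True by simp
next
  case False
  then have "common_lines n a b X Y / real n \<le> 1 / real n"
    using common_lines_le_one[OF n(1)] by (simp add: divide_right_mono)
  then show ?thesis using False by (auto simp: balanced_unit_def power_divide)
qed

lemma balanced_unit_no_common_line: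
  assumes "common_lines n a b X Y = 0"
  shows "balanced_unit n a b X Y = 3 * (1 / real n)\<^sup>2"
proof -
  have "\<not> X mod int n = a mod int n"
  proof
    assume "X mod int n = a mod int n"
    then have "1 \<le> common_lines n a b X Y" unfolding common_lines_def by simp
    then show False using assms by simp
  qed
  then show ?thesis using assms by (simp add: balanced_unit_def power_divide)
qed

section \<open>Large odd orders\<close>

definition corner_cells :: "(int \<times> int) set" where
  "corner_cells = {(0, 0), (1, -1), (1, 0), (1, 1)}"

lemma card_corner_cells: "card corner_cells = 4"
  by (simp add: corner_cells_def)

lemma corner_clique_mod_corner_cells:
  assumes "1 \<le> n" "(i, j) \<in> corner_clique n"
  shows "\<exists>(a, b)\<in>corner_cells. int i mod int n = a mod int n \<and> int j mod int n = b mod int n"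
proof -
  have "int (n - 1) mod int n = (- 1) mod int n"
    using assms(1) by (simp add: of_nat_diff mod_diff_eq)
  then show ?thesis using assms(2) by (auto simp: corner_clique_def corner_cells_def)
qed

lemma common_lines_with_all_corner_cells:
  assumes n: "5 \<le> n" and ij: "i < n" "j < n"
    and shares: "\<forall>(a, b)\<in>corner_cells. 0 < common_lines n a b (int i) (int j)"
  shows "(i, j) \<in> corner_clique n \<or> (i, j) = (2, 0)"
proof -
  define N I J where "N = int n" and "I = int i" and "J = int j"
  have range: "0 \<le> I" "I < N" "0 \<le> J" "J < N" "5 \<le> N"
    using n ij unfolding N_def I_def J_def by auto
  have residues: "I mod N = I" "J mod N = J"
    "(I - J) mod N = (if J \<le> I then I - J else I - J + N)"
    "(I + J) mod N = (if I + J < N then I + J else I + J - N)"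
    "0 mod N = 0" "1 mod N = 1" "2 mod N = 2" "(- 1) mod N = N - 1"
    using range mod_pos_pos_trivial[of "I - J + N" N] mod_pos_pos_trivial[of "I + J - N" N]
    by (auto simp: mod_pos_pos_trivial zmod_zminus1_eq_if)
  have pos: "0 < common_lines n a b I J \<longleftrightarrow>
      I mod N = a mod N \<or> J mod N = b mod N \<or>
      (I - J) mod N = (a - b) mod N \<or> (I + J) mod N = (a + b) mod N"
    for a b unfolding common_lines_def N_def by auto
  have "(I = 0 \<and> J = 0) \<or> (I = 1 \<and> (J = N - 1 \<or> J = 0 \<or> J = 1)) \<or> (I = 2 \<and> J = 0)"
    using shares[folded I_def J_def, unfolded corner_cells_def, simplified, unfolded pos] range
    by (auto simp: residues split: if_splits)
  then show ?thesis
    using n unfolding N_def I_def J_def corner_clique_def by auto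
qed

text \<open>Apart from the corner cells, (2,0) is the only cell sharing a line with all four of them;
  the balanced unit at (2,0) keeps that entry nonnegative.\<close>

definition corner_matrix :: "nat \<Rightarrow> int \<Rightarrow> int \<Rightarrow> real" where
  "corner_matrix n X Y = 1 / real n + (\<Sum>(a, b)\<in>corner_cells. balanced_unit n a b X Y) / 3
     + balanced_unit n 2 0 X Y / (2 * real n)"

lemma corner_matrix_mod: "corner_matrix n X (Y mod int n) = corner_matrix n X Y"
  by (simp add: corner_matrix_def balanced_unit_mod)

lemma sum_corner_matrix_line:
  assumes "0 < n" and zero: "\<And>a b. (\<Sum>x<n. balanced_unit n a b (P x) (Q x)) = 0"
  shows "(\<Sum>x<n. corner_matrix n (P x) (Q x)) = 1"
proof -
  have "(\<Sum>x<n. \<Sum>(a, b)\<in>corner_cells. balanced_unit n a b (P x) (Q x)) = 0"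
    by (subst sum.swap) (simp add: case_prod_beta zero)
  then show ?thesis
    using assms by (simp add: corner_matrix_def sum.distrib flip: sum_divide_distrib)
qed

lemma sum_corner_cells_ge:
  assumes n: "odd n" "3 \<le> n" and c: "(a, b) \<in> corner_cells"
  shows "balanced_unit n a b X Y + 9 * (1 / real n)\<^sup>2 - 3 * (1 / real n)
    \<le> (\<Sum>(a', b')\<in>corner_cells. balanced_unit n a' b' X Y)"
proof -
  have "finite corner_cells" by (simp add: corner_cells_def)
  have "card (corner_cells - {(a, b)}) = 3" using c by (simp add: card_corner_cells)
  then have "3 * (3 * (1 / real n)\<^sup>2 - 1 / real n)
      \<le> (\<Sum>(a', b')\<in>corner_cells - {(a, b)}. balanced_unit n a' b' X Y)"
    using sum_bounded_below[of "corner_cells - {(a, b)}" "3 * (1 / real n)\<^sup>2 - 1 / real n"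
        "\<lambda>(a', b'). balanced_unit n a' b' X Y"] balanced_unit_ge[OF n]
    by (simp add: case_prod_beta)
  then show ?thesis
    using sum.remove[OF \<open>finite corner_cells\<close> c, of "\<lambda>(a', b'). balanced_unit n a' b' X Y"] by simp
qed

lemma corner_matrix_ge:
  assumes "s \<le> (\<Sum>(a, b)\<in>corner_cells. balanced_unit n a b X Y)" "t \<le> balanced_unit n 2 0 X Y"
  shows "1 / real n + s / 3 + 1 / real n * t / 2 \<le> corner_matrix n X Y"
proof -
  have "1 / real n * t \<le> 1 / real n * balanced_unit n 2 0 X Y"
    using assms(2) by (intro mult_left_mono) auto
  then show ?thesis using assms(1) unfolding corner_matrix_def by simp
qed

lemma corner_matrix_ge_at_corner:
  assumes n: "odd n" "3 \<le> n"
    and c: "(a, b) \<in> corner_cells" "X mod int n = a mod int n" "Y mod int n = b mod int n"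
  shows "1 / 3 - 4 / 3 * (1 / real n) + 7 / 2 * (1 / real n)\<^sup>2 \<le> corner_matrix n X Y"
proof -
  define u where "u = 1 / real n"
  have "0 < u" using n unfolding u_def by simp
  have "1 - 7 * u + 12 * u\<^sup>2 \<le> (\<Sum>(a', b')\<in>corner_cells. balanced_unit n a' b' X Y)"
    using sum_corner_cells_ge[OF n c(1), of X Y] balanced_unit_same_cell[OF c(2,3)]
    unfolding u_def[symmetric] by linarith
  with balanced_unit_ge[OF n]
  have "u + (1 - 7 * u + 12 * u\<^sup>2) / 3 + u * (3 * u\<^sup>2 - u) / 2 \<le> corner_matrix n X Y"
    unfolding u_def by (intro corner_matrix_ge)
  moreover have "u + (1 - 7 * u + 12 * u\<^sup>2) / 3 + u * (3 * u\<^sup>2 - u) / 2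
      = 1 / 3 - 4 / 3 * u + 7 / 2 * u\<^sup>2 + 3 / 2 * u ^ 3"
    by (simp add: power2_eq_square power3_eq_cube divide_simps) (simp add: algebra_simps)
  moreover have "0 \<le> u ^ 3" using \<open>0 < u\<close> by simp
  ultimately show ?thesis unfolding u_def[symmetric] by linarith
qed

lemma corner_matrix_nonneg_off_corners:
  assumes n: "odd n" "3 \<le> n"
    and c: "(a, b) \<in> corner_cells" "common_lines n a b X Y = 0"
  shows "0 \<le> corner_matrix n X Y"
proof -
  define u where "u = 1 / real n"
  have "0 \<le> u\<^sup>2" "0 \<le> u ^ 3" using n unfolding u_def by simp_all
  have "12 * u\<^sup>2 - 3 * u \<le> (\<Sum>(a, b)\<in>corner_cells. balanced_unit n a b X Y)"
    using sum_corner_cells_ge[OF n c(1), of X Y] balanced_unit_no_common_line[OF c(2)]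
    unfolding u_def[symmetric] by linarith
  with balanced_unit_ge[OF n]
  have "u + (12 * u\<^sup>2 - 3 * u) / 3 + u * (3 * u\<^sup>2 - u) / 2 \<le> corner_matrix n X Y"
    unfolding u_def by (intro corner_matrix_ge)
  moreover have "u + (12 * u\<^sup>2 - 3 * u) / 3 + u * (3 * u\<^sup>2 - u) / 2 = 7 / 2 * u\<^sup>2 + 3 / 2 * u ^ 3"
    by (simp add: power2_eq_square power3_eq_cube divide_simps) (simp add: algebra_simps)
  ultimately show ?thesis using \<open>0 \<le> u\<^sup>2\<close> \<open>0 \<le> u ^ 3\<close> by linarith
qed

lemma corner_matrix_2_0_nonneg:
  assumes n: "odd n" "3 \<le> n"
  shows "0 \<le> corner_matrix n 2 0"
proof -
  define u where "u = 1 / real n"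
  have "0 < u" "0 \<le> u\<^sup>2" "0 \<le> u ^ 3" using n unfolding u_def by simp_all
  have "4 * (3 * u\<^sup>2 - u) \<le> (\<Sum>(a, b)\<in>corner_cells. balanced_unit n a b 2 0)"
    using sum_bounded_below[of corner_cells "3 * u\<^sup>2 - u" "\<lambda>(a, b). balanced_unit n a b 2 0"]
      balanced_unit_ge[OF n] unfolding u_def by (simp add: case_prod_beta card_corner_cells)
  moreover have "balanced_unit n 2 0 2 0 = 1 - 4 * u + 3 * u\<^sup>2"
    using balanced_unit_same_cell unfolding u_def by simp
  ultimately have "u + (12 * u\<^sup>2 - 4 * u) / 3 + u * (1 - 4 * u + 3 * u\<^sup>2) / 2 \<le> corner_matrix n 2 0"
    unfolding u_def by (intro corner_matrix_ge) (simp_all add: algebra_simps)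
  moreover have "u + (12 * u\<^sup>2 - 4 * u) / 3 + u * (1 - 4 * u + 3 * u\<^sup>2) / 2
      = u / 6 + 2 * u\<^sup>2 + 3 / 2 * u ^ 3"
    by (simp add: power2_eq_square power3_eq_cube divide_simps) (simp add: algebra_simps)
  ultimately show ?thesis using \<open>0 < u\<close> \<open>0 \<le> u\<^sup>2\<close> \<open>0 \<le> u ^ 3\<close> by linarith
qed

lemma corner_matrix_nonneg:
  assumes n: "odd n" "5 \<le> n" and ij: "i < n" "j < n"
  shows "0 \<le> corner_matrix n (int i) (int j)"
proof (cases "\<forall>(a, b)\<in>corner_cells. 0 < common_lines n a b (int i) (int j)")
  case True
  then consider "(i, j) \<in> corner_clique n" | "(i, j) = (2, 0)"
    using common_lines_with_all_corner_cells[OF n(2) ij] by blast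
  then show ?thesis
  proof cases
    case 1
    then obtain a b where "(a, b) \<in> corner_cells"
      "int i mod int n = a mod int n" "int j mod int n = b mod int n"
      using corner_clique_mod_corner_cells[of n i j] n by auto
    then have "1 / 3 - 4 / 3 * (1 / real n) + 7 / 2 * (1 / real n)\<^sup>2
        \<le> corner_matrix n (int i) (int j)"
      using corner_matrix_ge_at_corner n by simp
    moreover have "1 / real n \<le> 1 / 5" using n by (simp add: field_simps)
    moreover have "0 \<le> (1 / real n)\<^sup>2" by simp
    ultimately show ?thesis by linarith
  next
    case 2
    then show ?thesis using corner_matrix_2_0_nonneg n by simp
  qed
next
  case False
  then obtain a b where "(a, b) \<in> corner_cells" "\<not> 0 < common_lines n a b (int i) (int j)"
    by auto
  moreover have "0 \<le> common_lines n a b (int i) (int j)" by (simp add: common_lines_def)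
  ultimately show ?thesis using corner_matrix_nonneg_off_corners n by fastforce
qed

lemma panstochastic_corner_matrix:
  assumes n: "odd n" "5 \<le> n"
  shows "panstochastic n (\<lambda>i j. corner_matrix n (int i) (int j))"
proof (rule panstochastic_of_periodic)
  have "0 < n" using n by simp
  show "(\<Sum>y<n. corner_matrix n X (int y)) = 1" for X
    by (rule sum_corner_matrix_line[OF \<open>0 < n\<close> balanced_unit_row_sum[OF n(1)]])
  show "(\<Sum>x<n. corner_matrix n (int x) Y) = 1" for Y
    by (rule sum_corner_matrix_line[OF \<open>0 < n\<close> balanced_unit_col_sum[OF n(1)]])
  show "(\<Sum>x<n. corner_matrix n (int x) (K - int x)) = 1" for K
    by (rule sum_corner_matrix_line[OF \<open>0 < n\<close> balanced_unit_up_sum[OF n(1)]])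
  show "(\<Sum>x<n. corner_matrix n (int x) (int x - K)) = 1" for K
    by (rule sum_corner_matrix_line[OF \<open>0 < n\<close> balanced_unit_down_sum[OF n(1)]])
qed (use corner_matrix_mod corner_matrix_nonneg[OF n] in auto)

lemma ex_panstochastic_corner_sum_gt_one_ge_13:
  assumes n: "odd n" "13 \<le> n"
  shows "\<exists>A. panstochastic n A \<and> 1 < (\<Sum>(i, j)\<in>corner_clique n. A i j)"
proof (intro exI conjI)
  show "panstochastic n (\<lambda>i j. corner_matrix n (int i) (int j))"
    using panstochastic_corner_matrix n by simp
  define u where "u = 1 / real n"
  have u: "0 < u" "u \<le> 1 / 13" using n unfolding u_def by (auto simp: field_simps)
  have "1 / 3 - 4 / 3 * u + 7 / 2 * u\<^sup>2 \<le> corner_matrix n (int i) (int j)"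
    if ij: "(i, j) \<in> corner_clique n" for i j
  proof -
    obtain a b where "(a, b) \<in> corner_cells"
      "int i mod int n = a mod int n" "int j mod int n = b mod int n"
      using corner_clique_mod_corner_cells[of n i j] ij n by auto
    then show ?thesis
      using corner_matrix_ge_at_corner[of n a b] n unfolding u_def by simp
  qed
  moreover have "card (corner_clique n) = 4" using n by (simp add: corner_clique_def)
  ultimately have "4 * (1 / 3 - 4 / 3 * u + 7 / 2 * u\<^sup>2)
      \<le> (\<Sum>(i, j)\<in>corner_clique n. corner_matrix n (int i) (int j))"
    using sum_bounded_below[of "corner_clique n" "1 / 3 - 4 / 3 * u + 7 / 2 * u\<^sup>2"
        "\<lambda>(i, j). corner_matrix n (int i) (int j)"] by (simp add: case_prod_beta)
  moreover have "4 * (1 / 3 - 4 / 3 * u + 7 / 2 * u\<^sup>2) = 4 / 3 - 16 / 3 * u + 14 * u\<^sup>2" by simp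
  moreover have "0 \<le> (1 - 13 * u) * (1 - 3 * u)" using u by simp
  then have "0 \<le> 1 - 16 * u + 39 * u\<^sup>2" by (simp add: power2_eq_square algebra_simps)
  moreover have "0 < u\<^sup>2" using u by simp
  ultimately show "1 < (\<Sum>(i, j)\<in>corner_clique n. corner_matrix n (int i) (int j))"
    by linarith
qed

lemma ex_panstochastic_corner_sum_gt_one:
  assumes "odd n" "1 < n" "n \<noteq> 5"
  shows "\<exists>A. panstochastic n A \<and> 1 < (\<Sum>(i, j)\<in>corner_clique n. A i j)"
proof -
  have "n = 3 \<or> n \<in> {7, 9, 11} \<or> 13 \<le> n"
    using assms by simp presburger
  then show ?thesis
  proof (elim disjE)
    assume "n = 3"
    have "1 < (\<Sum>(i, j)\<in>corner_clique 3. 1 / real 3)"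
      by (simp add: corner_clique_def)
    then show ?thesis
      unfolding \<open>n = 3\<close> using panstochastic_uniform[of 3]
      by (intro exI[of _ "\<lambda>i j. 1 / real 3"]) simp
  next
    assume "n \<in> {7, 9, 11}"
    then show ?thesis by (rule ex_panstochastic_corner_sum_gt_one_7_9_11)
  next
    assume "13 \<le> n"
    then show ?thesis using ex_panstochastic_corner_sum_gt_one_ge_13 assms(1) by blast
  qed
qed

theorem theorem1p2:
  fixes n :: nat
  assumes "n > 1" and "n \<noteq> 5"
  shows "\<exists>A. panstochastic n A \<and>
           \<not> convex_comb_of n (\<lambda>P. permutation_matrix n P \<and> panstochastic n P) A"
proof (cases "even n")
  case True
  have "\<not> convex_comb_of n (\<lambda>P. permutation_matrix n P \<and> panstochastic n P) A" for A
  proof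
    assume "convex_comb_of n (\<lambda>P. permutation_matrix n P \<and> panstochastic n P) A"
    then obtain P where "permutation_matrix n P" "panstochastic n P"
      using convex_comb_of_imp_ex by blast
    then show False
      using permutation_matrix_not_panstochastic_even[OF True] assms(1) by simp
  qed
  then show ?thesis using panstochastic_uniform[of n] assms(1) by auto
next
  case False
  then obtain A where "panstochastic n A" "1 < (\<Sum>(i, j)\<in>corner_clique n. A i j)"
    using ex_panstochastic_corner_sum_gt_one assms by blast
  then show ?thesis
    using not_convex_comb_if_clique_sum_gt_one[OF line_clique_corner_clique[OF assms(1)]] by blast
qed

end
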